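(* Let $\gamma\in(0,2/f_{\max})$. The map $\mathcal Z:\mathbb S_c^{N\times N}\to\mathbb S_c^{N\times N}$, $\mathcal Z(\tilde h)=\mathcal Q\big(\gamma(\tilde X_R+j\tilde X_I)+\tilde h-\gamma(\mathcal F(\tilde h_R)+j\mathcal F(\tilde h_I)-\tfrac{1+j}{2})\big)$, is a contraction on the set of complex matrices in $\mathbb S_c^{N\times N}$ with respect to the Frobenius distance.
   Context: $M,N$ positive integers with $N>2M$; $g$ is a real $M\times M$ image with values in $[0,255]$ zero-padded to $N\times N$, $\tilde g=\tilde g_R+j\tilde g_I$ its $N\times N$ 2D-DFT $\mathfrak F(g)$; $\tilde X_R=\mathbb 1(\tilde g_R+W_R+d_R>0)-\tfrac12$, $\tilde X_I=\mathbb 1(\tilde g_I+W_I+d_I>0)-\tfrac12$ entrywise, where $W_R,W_I$ are independent zero-mean noise of known distribution symmetric about $0$ and $d_R,d_I$ independent AWGN dither, ensuring the total noise density is positive on the signal range. $\mathcal F$ is the CDF and $f$ the PDF of the total noise, applied entrywise; $f_{\max}$ is the maximum of $f$ over the region within the bounds of the signal. $\tilde h_R,\tilde h_I$ are the real and imaginary parts of $\tilde h$. $\mathbb S_c=\{a+jb:a,b\in[-255N^2,255N^2]\}$. $\mathcal Q(\tilde h)=\mathfrak F(\textsc{Clip}(\textsc{Proj}(\mathfrak F^{-1}(\tilde h))))$, where $\textsc{Proj}$ zeroes spatial-domain pixels outside the $M^2$-pixel image block and $\textsc{Clip}$ clips pixel values to $[0,255]$. *)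

theory Defs
  imports "HOL-Analysis.Analysis"
begin

text \<open>N x N complex matrices are represented as functions nat => nat => complex;
  only the entries with indices below N are meaningful.\<close>

type_synonym cmat = "nat \<Rightarrow> nat \<Rightarrow> complex"
type_synonym rmat = "nat \<Rightarrow> nat \<Rightarrow> real"

definition dft2 :: "nat \<Rightarrow> cmat \<Rightarrow> cmat" where
  "dft2 N x = (\<lambda>k l. \<Sum>m<N. \<Sum>n<N.
      x m n * cis (- 2 * pi * (real k * real m + real l * real n) / real N))"

definition idft2 :: "nat \<Rightarrow> cmat \<Rightarrow> cmat" where
  "idft2 N X = (\<lambda>m n. (1 / of_nat (N^2)) * (\<Sum>k<N. \<Sum>l<N.
      X k l * cis (2 * pi * (real k * real m + real l * real n) / real N)))"

definition proj_blk :: "nat \<Rightarrow> cmat \<Rightarrow> cmat" where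
  "proj_blk M x = (\<lambda>m n. if m < M \<and> n < M then x m n else 0)"

definition clip_px :: "cmat \<Rightarrow> cmat" where
  "clip_px x = (\<lambda>m n. complex_of_real (max 0 (min 255 (Re (x m n)))))"

definition Qop :: "nat \<Rightarrow> nat \<Rightarrow> cmat \<Rightarrow> cmat" where
  "Qop N M h = dft2 N (clip_px (proj_blk M (idft2 N h)))"

definition frob_dist :: "nat \<Rightarrow> cmat \<Rightarrow> cmat \<Rightarrow> real" where
  "frob_dist N A B = sqrt (\<Sum>i<N. \<Sum>j<N. (cmod (A i j - B i j))^2)"

definition Sc :: "nat \<Rightarrow> complex set" where
  "Sc N = {z. \<bar>Re z\<bar> \<le> 255 * real N ^ 2 \<and> \<bar>Im z\<bar> \<le> 255 * real N ^ 2}"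

definition ScMat :: "nat \<Rightarrow> cmat set" where
  "ScMat N = {h. \<forall>i<N. \<forall>j<N. h i j \<in> Sc N}"

definition fmax :: "nat \<Rightarrow> (real \<Rightarrow> real) \<Rightarrow> real" where
  "fmax N f = Sup (f ` {- 255 * real N ^ 2 .. 255 * real N ^ 2})"

text \<open>One-bit quantised measurement: indicator(x > 0) - 1/2.\<close>
definition sgnbit :: "real \<Rightarrow> real" where
  "sgnbit x = (if x > 0 then 1 else 0) - 1/2"

end

theory Submission
  imports Defs
begin

(* Z is Q composed with the entrywise map h \<mapsto> c + \<phi>(Re h) + j \<phi>(Im h), where
   \<phi>(x) = x - \<gamma> F(x).  Q is nonexpansive in the Frobenius distance: by Parseval the DFT
   multiplies Frobenius norms by N and its inverse divides them by N, and in between Proj and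
   Clip are 1-Lipschitz pixel by pixel.  On the signal range [-255 N^2, 255 N^2] the derivative
   1 - \<gamma> f of \<phi> lies in [1 - \<gamma> f_max, 1 - \<gamma> f_min], so \<phi> is Lipschitz with constant
   max (1 - \<gamma> f_min) (\<gamma> f_max - 1) < 1, using f_min > 0 and \<gamma> f_max < 2.  Q maps into
   S_c because every DFT coefficient of an image with pixels in [0,255] has modulus at most
   255 N^2. *)

definition frob_sq :: "nat \<Rightarrow> cmat \<Rightarrow> real" where
  "frob_sq N A = (\<Sum>i<N. \<Sum>j<N. (cmod (A i j))\<^sup>2)"

text \<open>One Parseval identity for this kernel serves both \<^const>\<open>dft2\<close> (by conjugation)
  and \<^const>\<open>idft2\<close> (by scaling).\<close>

definition fourier2 :: "nat \<Rightarrow> cmat \<Rightarrow> cmat" where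
  "fourier2 N x = (\<lambda>k l. \<Sum>m<N. \<Sum>n<N. x m n * cis (2 * pi * (real k * real m + real l * real n) / real N))"

lemma sum_cis_orthogonal:
  assumes "m < N" "m' < N"
  shows "(\<Sum>k<N. cis (2 * pi * real k * real m / real N) * cnj (cis (2 * pi * real k * real m' / real N)))
       = (if m = m' then of_nat N else 0)"
proof -
  define u where "u j = cis (2 * pi * real j / real N)" for j :: nat
  define z where "z = u m * cnj (u m')"
  have powers: "cis (2 * pi * real k * real m / real N) * cnj (cis (2 * pi * real k * real m' / real N)) = z ^ k"
    for k
    by (simp add: z_def u_def power_mult_distrib Complex.DeMoivre cis_cnj flip: complex_cnj_power) (simp add: mult_ac)
  have unit: "cnj (u j) * u j = 1" for j
    by (simp add: u_def cis_cnj cis_mult)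
  show ?thesis
  proof (cases "m = m'")
    case True
    then have "z = 1" using unit by (simp add: z_def mult.commute)
    then show ?thesis unfolding powers using True by simp
  next
    case False
    have "bij_betw u {..<N} {z. z ^ N = 1}"
      unfolding u_def using assms by (intro Complex.bij_betw_roots_unity) simp
    then have "u m \<noteq> u m'" "u m ^ N = 1" "u m' ^ N = 1"
      using False assms by (auto simp: bij_betw_def inj_on_def)
    then have "z ^ N = 1"
      by (simp add: z_def power_mult_distrib flip: complex_cnj_power)
    moreover have "z \<noteq> 1"
    proof
      assume "z = 1"
      have "u m = u m * (cnj (u m') * u m')" using unit by simp
      also have "\<dots> = z * u m'" by (simp add: z_def mult.assoc)
      finally show False using \<open>z = 1\<close> \<open>u m \<noteq> u m'\<close> by simp
    qed
    ultimately show ?thesis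
      unfolding powers using False by (simp add: geometric_sum)
  qed
qed

lemma sum_norm_fourier_sq:
  "(\<Sum>k<N. (cmod (\<Sum>m<N. v m * cis (2 * pi * real k * real m / real N)))\<^sup>2)
     = real N * (\<Sum>m<N. (cmod (v m))\<^sup>2)"
proof -
  define c where "c k m = cis (2 * pi * real k * real m / real N)" for k m :: nat
  have "complex_of_real (\<Sum>k<N. (cmod (\<Sum>m<N. v m * c k m))\<^sup>2)
      = (\<Sum>k<N. (\<Sum>m<N. v m * c k m) * cnj (\<Sum>m'<N. v m' * c k m'))"
    by (simp only: of_real_sum complex_norm_square)
  also have "\<dots> = (\<Sum>k<N. \<Sum>m<N. \<Sum>m'<N. v m * cnj (v m') * (c k m * cnj (c k m')))"
    by (simp add: cnj_sum sum_product mult_ac)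
  also have "\<dots> = (\<Sum>m<N. \<Sum>m'<N. v m * cnj (v m') * (\<Sum>k<N. c k m * cnj (c k m')))"
  proof -
    have "(\<Sum>k<N. \<Sum>m<N. \<Sum>m'<N. v m * cnj (v m') * (c k m * cnj (c k m')))
        = (\<Sum>m<N. \<Sum>m'<N. \<Sum>k<N. v m * cnj (v m') * (c k m * cnj (c k m')))"
      by (subst sum.swap) (intro sum.cong refl sum.swap)
    then show ?thesis by (simp add: sum_distrib_left)
  qed
  also have "\<dots> = (\<Sum>m<N. \<Sum>m'<N. v m * cnj (v m') * (if m = m' then of_nat N else 0))"
    unfolding c_def by (intro sum.cong refl) (simp add: sum_cis_orthogonal)
  also have "\<dots> = complex_of_real (real N * (\<Sum>m<N. (cmod (v m))\<^sup>2))"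
    by (simp add: if_distrib sum.delta sum_distrib_left mult_ac cong: if_cong
        flip: complex_norm_square of_real_power)
  finally show ?thesis unfolding c_def of_real_eq_iff .
qed

lemma frob_sq_fourier2: "frob_sq N (fourier2 N x) = real N ^ 2 * frob_sq N x"
proof -
  define c where "c k m = cis (2 * pi * real k * real m / real N)" for k m :: nat
  define w where "w l m = (\<Sum>n<N. x m n * c l n)" for l m
  have rows: "fourier2 N x k l = (\<Sum>m<N. w l m * c k m)" for k l
  proof -
    have "cis (2 * pi * (real k * real m + real l * real n) / real N) = c k m * c l n" for m n
      unfolding c_def cis_mult by (simp add: field_simps add_divide_distrib)
    then show ?thesis
      unfolding fourier2_def w_def by (simp add: sum_distrib_right sum_distrib_left mult_ac)
  qed
  have "frob_sq N (fourier2 N x) = (\<Sum>l<N. \<Sum>k<N. (cmod (\<Sum>m<N. w l m * c k m))\<^sup>2)"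
    unfolding frob_sq_def rows by (rule sum.swap)
  also have "\<dots> = (\<Sum>l<N. real N * (\<Sum>m<N. (cmod (w l m))\<^sup>2))"
    unfolding c_def sum_norm_fourier_sq ..
  also have "\<dots> = real N * (\<Sum>m<N. \<Sum>l<N. (cmod (\<Sum>n<N. x m n * c l n))\<^sup>2)"
    unfolding w_def sum_distrib_left by (rule sum.swap)
  also have "\<dots> = real N ^ 2 * frob_sq N x"
    unfolding c_def sum_norm_fourier_sq frob_sq_def
    by (simp add: sum_distrib_left power2_eq_square mult.assoc)
  finally show ?thesis .
qed

lemma frob_sq_cnj [simp]: "frob_sq N (\<lambda>i j. cnj (A i j)) = frob_sq N A"
  by (simp add: frob_sq_def)

lemma dft2_eq_cnj_fourier2: "dft2 N x = (\<lambda>k l. cnj (fourier2 N (\<lambda>m n. cnj (x m n)) k l))"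
  unfolding dft2_def fourier2_def by (simp add: fun_eq_iff cnj_sum cis_cnj)

lemma idft2_eq_fourier2: "idft2 N X m n = fourier2 N X m n / of_nat (N\<^sup>2)"
  unfolding idft2_def fourier2_def by (simp add: mult_ac)

lemma frob_sq_dft2: "frob_sq N (dft2 N x) = real N ^ 2 * frob_sq N x"
  by (simp add: dft2_eq_cnj_fourier2 frob_sq_fourier2)

lemma frob_sq_idft2: "frob_sq N (idft2 N X) = frob_sq N X / real N ^ 2"
proof (cases "N = 0")
  case False
  have "frob_sq N (idft2 N X) = frob_sq N (fourier2 N X) / (real N ^ 2)\<^sup>2"
    by (simp add: frob_sq_def idft2_eq_fourier2 norm_divide norm_power power_divide sum_divide_distrib)
  then show ?thesis using False by (simp add: frob_sq_fourier2 power2_eq_square)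
qed (simp add: frob_sq_def)

lemma dft2_diff: "dft2 N (a - b) = dft2 N a - dft2 N b"
  by (simp add: dft2_def fun_eq_iff sum_subtractf left_diff_distrib)

lemma idft2_diff: "idft2 N (a - b) = idft2 N a - idft2 N b"
  by (simp add: idft2_def fun_eq_iff sum_subtractf left_diff_distrib right_diff_distrib)

lemma frob_dist_eq: "frob_dist N A B = sqrt (frob_sq N (A - B))"
  by (simp add: frob_dist_def frob_sq_def)

lemma frob_sq_mono:
  assumes "\<And>i j. i < N \<Longrightarrow> j < N \<Longrightarrow> cmod (A i j) \<le> cmod (B i j)"
  shows "frob_sq N A \<le> frob_sq N B"
  unfolding frob_sq_def using assms by (intro sum_mono power_mono) auto

lemma frob_dist_le_entrywise:
  assumes "0 \<le> L" and "\<And>i j. i < N \<Longrightarrow> j < N \<Longrightarrow> cmod (A i j - B i j) \<le> L * cmod (C i j - D i j)"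
  shows "frob_dist N A B \<le> L * frob_dist N C D"
proof -
  have "frob_sq N (A - B) \<le> frob_sq N (\<lambda>i j. of_real L * (C i j - D i j))"
    using assms by (intro frob_sq_mono) (simp add: norm_mult)
  also have "\<dots> = L\<^sup>2 * frob_sq N (C - D)"
    by (simp add: frob_sq_def norm_mult power_mult_distrib sum_distrib_left)
  finally have "sqrt (frob_sq N (A - B)) \<le> sqrt (L\<^sup>2 * frob_sq N (C - D))"
    by (rule real_sqrt_le_mono)
  then show ?thesis
    using assms(1) by (simp add: frob_dist_eq real_sqrt_mult)
qed

lemma norm_clip_px_diff_le: "cmod (clip_px x m n - clip_px y m n) \<le> cmod (x m n - y m n)"
proof -
  have "cmod (clip_px x m n - clip_px y m n)
      = \<bar>max 0 (min 255 (Re (x m n))) - max 0 (min 255 (Re (y m n)))\<bar>"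
    unfolding clip_px_def by (simp flip: of_real_diff)
  also have "\<dots> \<le> \<bar>Re (x m n - y m n)\<bar>" by simp
  also have "\<dots> \<le> cmod (x m n - y m n)" by (rule abs_Re_le_cmod)
  finally show ?thesis .
qed

lemma norm_proj_blk_diff_le: "cmod (proj_blk M x m n - proj_blk M y m n) \<le> cmod (x m n - y m n)"
  by (simp add: proj_blk_def)

lemma frob_dist_Qop_le: "frob_dist N (Qop N M a) (Qop N M b) \<le> frob_dist N a b"
proof -
  define u where "u c = clip_px (proj_blk M (idft2 N c))" for c
  have pointwise: "cmod ((u a - u b) i j) \<le> cmod ((idft2 N a - idft2 N b) i j)" for i j
    unfolding u_def fun_diff_def using order_trans[OF norm_clip_px_diff_le norm_proj_blk_diff_le] .
  have "frob_sq N (Qop N M a - Qop N M b) = real N ^ 2 * frob_sq N (u a - u b)"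
    unfolding Qop_def u_def dft2_diff [symmetric] by (rule frob_sq_dft2)
  also have "\<dots> \<le> real N ^ 2 * frob_sq N (idft2 N a - idft2 N b)"
    by (intro mult_left_mono frob_sq_mono pointwise) simp
  also have "\<dots> = frob_sq N (a - b)"
    unfolding idft2_diff [symmetric] frob_sq_idft2 by (cases "N = 0") (simp_all add: frob_sq_def)
  finally show ?thesis by (simp add: frob_dist_eq)
qed

lemma norm_dft2_le:
  assumes "\<And>m n. m < N \<Longrightarrow> n < N \<Longrightarrow> cmod (x m n) \<le> B"
  shows "cmod (dft2 N x k l) \<le> real N ^ 2 * B"
proof -
  have "cmod (dft2 N x k l) \<le> (\<Sum>m<N. \<Sum>n<N. cmod (x m n))"
    unfolding dft2_def
    by (intro order_trans[OF norm_sum] sum_mono) (simp add: order_trans[OF norm_sum] norm_mult)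
  also have "\<dots> \<le> (\<Sum>m<N. \<Sum>n<N. B)"
    using assms by (intro sum_mono) auto
  finally show ?thesis by (simp add: power2_eq_square)
qed

lemma Qop_in_ScMat: "Qop N M h \<in> ScMat N"
proof -
  have "cmod (Qop N M h k l) \<le> real N ^ 2 * 255" for k l
    unfolding Qop_def by (rule norm_dft2_le) (simp add: clip_px_def)
  then have "\<bar>Re (Qop N M h k l)\<bar> \<le> 255 * real N ^ 2 \<and> \<bar>Im (Qop N M h k l)\<bar> \<le> 255 * real N ^ 2" for k l
    by (metis abs_Im_le_cmod abs_Re_le_cmod mult.commute order_trans)
  then show ?thesis by (simp add: ScMat_def Sc_def)
qed

lemma lipschitz_on_id_minus_scaled:
  fixes F f :: "real \<Rightarrow> real"
  assumes "convex I"
    and deriv: "\<And>x. x \<in> I \<Longrightarrow> (F has_real_derivative f x) (at x)"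
    and bounds: "\<And>x. x \<in> I \<Longrightarrow> a \<le> f x \<and> f x \<le> b"
    and "a \<le> b" "0 \<le> \<gamma>"
  shows "(max (1 - \<gamma> * a) (\<gamma> * b - 1))-lipschitz_on I (\<lambda>x. x - \<gamma> * F x)"
proof (rule lipschitz_onI)
  fix x y assume "x \<in> I" "y \<in> I"
  have "((\<lambda>x. x - \<gamma> * F x) has_field_derivative 1 - \<gamma> * f z) (at z within I)" if "z \<in> I" for z
    using has_field_derivative_at_within[OF deriv[OF that]]
    by (intro derivative_eq_intros) auto
  moreover have "norm (1 - \<gamma> * f z) \<le> max (1 - \<gamma> * a) (\<gamma> * b - 1)" if "z \<in> I" for z
  proof -
    have "\<gamma> * a \<le> \<gamma> * f z" "\<gamma> * f z \<le> \<gamma> * b"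
      using bounds[OF that] \<open>0 \<le> \<gamma>\<close> by (simp_all add: mult_left_mono)
    then show ?thesis by (simp add: real_norm_def)
  qed
  ultimately show "dist (x - \<gamma> * F x) (y - \<gamma> * F y) \<le> max (1 - \<gamma> * a) (\<gamma> * b - 1) * dist x y"
    unfolding dist_norm using \<open>convex I\<close> \<open>x \<in> I\<close> \<open>y \<in> I\<close> by (intro field_differentiable_bound)
next
  show "0 \<le> max (1 - \<gamma> * a) (\<gamma> * b - 1)"
    using mult_left_mono[OF \<open>a \<le> b\<close> \<open>0 \<le> \<gamma>\<close>] by linarith
qed

lemma lipschitz_on_Complex_componentwise:
  assumes "L-lipschitz_on I \<phi>"
  shows "L-lipschitz_on {z. Re z \<in> I \<and> Im z \<in> I} (\<lambda>z. Complex (\<phi> (Re z)) (\<phi> (Im z)))"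
proof (rule lipschitz_onI)
  have "0 \<le> L" using lipschitz_on_nonneg[OF assms] .
  fix z w assume "z \<in> {z. Re z \<in> I \<and> Im z \<in> I}" "w \<in> {z. Re z \<in> I \<and> Im z \<in> I}"
  then have "\<bar>\<phi> (Re z) - \<phi> (Re w)\<bar> \<le> \<bar>L * (Re z - Re w)\<bar>"
    and "\<bar>\<phi> (Im z) - \<phi> (Im w)\<bar> \<le> \<bar>L * (Im z - Im w)\<bar>"
    using lipschitz_onD[OF assms] \<open>0 \<le> L\<close> by (auto simp: dist_real_def abs_mult)
  then have "(\<phi> (Re z) - \<phi> (Re w))\<^sup>2 + (\<phi> (Im z) - \<phi> (Im w))\<^sup>2
      \<le> L\<^sup>2 * ((Re z - Re w)\<^sup>2 + (Im z - Im w)\<^sup>2)"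
    unfolding abs_le_square_iff by (simp add: power_mult_distrib distrib_left)
  then have "sqrt ((\<phi> (Re z) - \<phi> (Re w))\<^sup>2 + (\<phi> (Im z) - \<phi> (Im w))\<^sup>2)
      \<le> sqrt (L\<^sup>2 * ((Re z - Re w)\<^sup>2 + (Im z - Im w)\<^sup>2))"
    by (rule real_sqrt_le_mono)
  then show "dist (Complex (\<phi> (Re z)) (\<phi> (Im z))) (Complex (\<phi> (Re w)) (\<phi> (Im w))) \<le> L * dist z w"
    using \<open>0 \<le> L\<close> by (simp add: dist_norm complex_norm cmod_def real_sqrt_mult)
qed (rule lipschitz_on_nonneg[OF assms])

lemma frob_dist_Qop_componentwise_le:
  assumes "L-lipschitz_on I \<phi>"
    and "\<And>i j. i < N \<Longrightarrow> j < N \<Longrightarrow> Re (h1 i j) \<in> I \<and> Im (h1 i j) \<in> I"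
    and "\<And>i j. i < N \<Longrightarrow> j < N \<Longrightarrow> Re (h2 i j) \<in> I \<and> Im (h2 i j) \<in> I"
  shows "frob_dist N (Qop N M (\<lambda>i j. P i j + Complex (\<phi> (Re (h1 i j))) (\<phi> (Im (h1 i j)))))
                     (Qop N M (\<lambda>i j. P i j + Complex (\<phi> (Re (h2 i j))) (\<phi> (Im (h2 i j)))))
         \<le> L * frob_dist N h1 h2"
proof (rule order_trans[OF frob_dist_Qop_le frob_dist_le_entrywise])
  show "0 \<le> L" using lipschitz_on_nonneg[OF assms(1)] .
  fix i j assume "i < N" "j < N"
  then show "cmod (P i j + Complex (\<phi> (Re (h1 i j))) (\<phi> (Im (h1 i j)))
                 - (P i j + Complex (\<phi> (Re (h2 i j))) (\<phi> (Im (h2 i j)))))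
             \<le> L * cmod (h1 i j - h2 i j)"
    using lipschitz_onD[OF lipschitz_on_Complex_componentwise[OF assms(1)], of "h1 i j" "h2 i j"] assms(2,3)
    by (simp add: dist_norm)
qed

lemma continuous_on_compact_pos_imp_lower_bound:
  fixes f :: "'a::topological_space \<Rightarrow> real"
  assumes "compact S" "continuous_on S f" "\<And>x. x \<in> S \<Longrightarrow> 0 < f x"
  shows "\<exists>a>0. \<forall>x\<in>S. a \<le> f x"
proof (cases "S = {}")
  case False
  then obtain x0 where "x0 \<in> S" "\<forall>x\<in>S. f x0 \<le> f x"
    using continuous_attains_inf[OF assms(1) _ assms(2)] by blast
  then show ?thesis using assms(3) by blast
qed (use zero_less_one in blast)

lemma fmax_upper:
  assumes "continuous_on UNIV f" "x \<in> {- 255 * real N ^ 2 .. 255 * real N ^ 2}"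
  shows "f x \<le> fmax N f"
proof -
  have "bdd_above (f ` {- 255 * real N ^ 2 .. 255 * real N ^ 2})"
    using assms(1) by (intro bounded_imp_bdd_above compact_imp_bounded compact_continuous_image)
      (auto intro: continuous_on_subset)
  then show ?thesis unfolding fmax_def using assms(2) by (intro cSup_upper) auto
qed

lemma ScMat_memD:
  "h \<in> ScMat N \<Longrightarrow> i < N \<Longrightarrow> j < N \<Longrightarrow>
    Re (h i j) \<in> {- 255 * real N ^ 2 .. 255 * real N ^ 2} \<and> Im (h i j) \<in> {- 255 * real N ^ 2 .. 255 * real N ^ 2}"
  unfolding ScMat_def Sc_def by (fastforce simp: abs_le_iff)

theorem lemma5:
  fixes M N :: nat
    and g :: rmat                   \<comment> \<open>image (zero padded)\<close>
    and WR WI dR dI :: rmat         \<comment> \<open>realisations of noise and dither\<close>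
    and F f :: "real \<Rightarrow> real"       \<comment> \<open>CDF and PDF of the total noise\<close>
    and \<gamma> :: real
  assumes "0 < M" and "2 * M < N"
    and g_range: "\<forall>i<M. \<forall>j<M. 0 \<le> g i j \<and> g i j \<le> 255"
    and g_pad: "\<forall>i j. \<not> (i < M \<and> j < M) \<longrightarrow> g i j = 0"
    and F_mono: "mono F"
    and F_bot: "(F \<longlongrightarrow> 0) at_bot" and F_top: "(F \<longlongrightarrow> 1) at_top"
    and F_symm: "\<forall>x. F (- x) = 1 - F x"
    and F_deriv: "\<forall>x. (F has_real_derivative f x) (at x)"
    and f_cont: "continuous_on UNIV f"
    and f_nonneg: "\<forall>x. 0 \<le> f x"
    and f_pos: "\<forall>x \<in> {- 255 * real N ^ 2 .. 255 * real N ^ 2}. 0 < f x"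
    and \<gamma>_range: "0 < \<gamma>" "\<gamma> < 2 / fmax N f"
  shows
    "let gt = dft2 N (\<lambda>i j. complex_of_real (g i j));
         XR = (\<lambda>i j. sgnbit (Re (gt i j) + WR i j + dR i j));
         XI = (\<lambda>i j. sgnbit (Im (gt i j) + WI i j + dI i j));
         Z = (\<lambda>h. Qop N M (\<lambda>i j.
                complex_of_real \<gamma> * Complex (XR i j) (XI i j) + h i j
                - complex_of_real \<gamma> * (Complex (F (Re (h i j))) (F (Im (h i j))) - Complex (1/2) (1/2))))
     in (\<forall>h \<in> ScMat N. Z h \<in> ScMat N) \<and>
        (\<exists>L. 0 \<le> L \<and> L < 1 \<and>
           (\<forall>h1 \<in> ScMat N. \<forall>h2 \<in> ScMat N. frob_dist N (Z h1) (Z h2) \<le> L * frob_dist N h1 h2))"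
proof -
  define I where "I = {- 255 * real N ^ 2 .. 255 * real N ^ 2}"
  define \<phi> where "\<phi> x = x - \<gamma> * F x" for x
  obtain a where a: "0 < a" "\<forall>x\<in>I. a \<le> f x"
    using continuous_on_compact_pos_imp_lower_bound[of "I" f] f_cont f_pos
    unfolding I_def by (meson compact_Icc continuous_on_subset subset_UNIV)
  have f_le: "f x \<le> fmax N f" if "x \<in> I" for x
    using fmax_upper[OF f_cont] that unfolding I_def .
  have "0 \<in> I" by (simp add: I_def)
  then have "a \<le> fmax N f" "0 < fmax N f"
    using a f_le[of 0] order_trans by fastforce+
  define L where "L = max (1 - \<gamma> * a) (\<gamma> * fmax N f - 1)"
  have lip: "L-lipschitz_on I \<phi>"
    unfolding L_def \<phi>_def using F_deriv a f_le \<open>a \<le> fmax N f\<close> \<gamma>_range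
    by (intro lipschitz_on_id_minus_scaled) (auto simp: I_def)
  have "\<gamma> * fmax N f < 2"
    using \<gamma>_range \<open>0 < fmax N f\<close> by (simp add: field_simps)
  then have "L < 1" using a \<gamma>_range unfolding L_def by simp
  have step: "complex_of_real \<gamma> * X + z - complex_of_real \<gamma> * (Complex (F (Re z)) (F (Im z)) - Complex (1/2) (1/2))
      = (complex_of_real \<gamma> * X + complex_of_real \<gamma> * Complex (1/2) (1/2)) + Complex (\<phi> (Re z)) (\<phi> (Im z))"
    for X z by (simp add: complex_eq_iff \<phi>_def algebra_simps)
  have entries: "Re (h i j) \<in> I \<and> Im (h i j) \<in> I" if "h \<in> ScMat N" "i < N" "j < N" for h i j
    using ScMat_memD[OF that] unfolding I_def .
  show ?thesis
    unfolding Let_def step using Qop_in_ScMat lipschitz_on_nonneg[OF lip] \<open>L < 1\<close>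
    by (intro conjI ballI exI[of _ L] frob_dist_Qop_componentwise_le[OF lip] entries) auto
qed

end
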